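(* Let $\tau>0$ and $S\subset V$, and let $S'=\{i\in V:(e^{-\tau\Delta}\chi_S)_i\ge\frac12\}$ be the result of one MBO iteration started from $S$. Let $\rho$ be the spectral radius of $\Delta$. Then $S'=S$, i.e. the MBO iterates starting from $S$ are stationary, if either of the following holds: (i) $S\ne\emptyset$ and $$\tau<\tau_\rho(S):=\rho^{-1}\log\Big(1+\tfrac12\,d_-^{r/2}(\mathrm{vol}\,S)^{-1/2}\Big);$$ (ii) $\Delta\chi_S\ne0$ and $$\tau\le\tau_\kappa(S):=\frac1{2\max_{i\in V}|(\Delta\chi_S)_i|}.$$
   Context: $G=(V,E)$ is a finite undirected weighted graph with vertex set $V=\{1,\dots,n\}$. The weights satisfy $\omega_{ij}=\omega_{ji}\ge0$, with $\omega_{ij}>0$ iff $\{i,j\}\in E$, and $\omega_{ii}=0$. The degrees are $d_i=\sum_j\omega_{ij}>0$, and $d_-=\min_id_i$. A parameter $r\in[0,1]$ is fixed. $\mathcal V$ is the space of functions $V\to\mathbb R$ with $\langle u,v\rangle_{\mathcal V}=\sum_iu_iv_id_i^r$. For $S\subset V$, $\chi_S$ is the indicator of $S$ and $\mathrm{vol}\,S=\sum_{i\in S}d_i^r$. The graph Laplacian is $(\Delta u)_i=d_i^{-r}\sum_j\omega_{ij}(u_i-u_j)$, which is self-adjoint and positive semidefinite for $\langle\cdot,\cdot\rangle_{\mathcal V}$. $e^{-t\Delta}$ is the solution operator of $\dot u=-\Delta u$. *)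

theory Defs
  imports "HOL-Analysis.Analysis"
begin

definition degree :: "('v::finite \<Rightarrow> 'v \<Rightarrow> real) \<Rightarrow> 'v \<Rightarrow> real" where
  "degree w i = (\<Sum>j\<in>UNIV. w i j)"

definition min_degree :: "('v::finite \<Rightarrow> 'v \<Rightarrow> real) \<Rightarrow> real" where
  "min_degree w = Min (range (degree w))"

definition vol :: "('v::finite \<Rightarrow> 'v \<Rightarrow> real) \<Rightarrow> real \<Rightarrow> 'v set \<Rightarrow> real" where
  "vol w r S = (\<Sum>i\<in>S. degree w i powr r)"

definition graph_laplacian ::
  "('v::finite \<Rightarrow> 'v \<Rightarrow> real) \<Rightarrow> real \<Rightarrow> ('v \<Rightarrow> real) \<Rightarrow> ('v \<Rightarrow> real)" where
  "graph_laplacian w r u = (\<lambda>i. degree w i powr (- r) * (\<Sum>j\<in>UNIV. w i j * (u i - u j)))"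

text \<open>The same linear operator acting on complex-valued functions (for the spectrum).\<close>
definition graph_laplacian_c ::
  "('v::finite \<Rightarrow> 'v \<Rightarrow> real) \<Rightarrow> real \<Rightarrow> ('v \<Rightarrow> complex) \<Rightarrow> ('v \<Rightarrow> complex)" where
  "graph_laplacian_c w r u =
     (\<lambda>i. complex_of_real (degree w i powr (- r)) *
          (\<Sum>j\<in>UNIV. complex_of_real (w i j) * (u i - u j)))"

definition laplacian_eigenvalues :: "('v::finite \<Rightarrow> 'v \<Rightarrow> real) \<Rightarrow> real \<Rightarrow> complex set" where
  "laplacian_eigenvalues w r =
     {c. \<exists>u::'v \<Rightarrow> complex. u \<noteq> (\<lambda>_. 0) \<and> graph_laplacian_c w r u = (\<lambda>i. c * u i)}"

definition laplacian_spectral_radius :: "('v::finite \<Rightarrow> 'v \<Rightarrow> real) \<Rightarrow> real \<Rightarrow> real" where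
  "laplacian_spectral_radius w r = Sup (cmod ` laplacian_eigenvalues w r)"

definition heat :: "('v::finite \<Rightarrow> 'v \<Rightarrow> real) \<Rightarrow> real \<Rightarrow> real \<Rightarrow> ('v \<Rightarrow> real) \<Rightarrow> ('v \<Rightarrow> real)" where
  "heat w r t u = (\<lambda>i. \<Sum>k. (- t) ^ k / fact k * ((graph_laplacian w r ^^ k) u) i)"

definition mbo_step :: "('v::finite \<Rightarrow> 'v \<Rightarrow> real) \<Rightarrow> real \<Rightarrow> real \<Rightarrow> 'v set \<Rightarrow> 'v set" where
  "mbo_step w r \<tau> S = {i. heat w r \<tau> (indicator S) i \<ge> 1/2}"

end

theory Submission
  imports Defs
begin

text \<open>
  (i) \<open>\<Delta>\<close> is self-adjoint and positive semidefinite for \<open>\<langle>\<cdot>,\<cdot>\<rangle>\<^sub>\<V>\<close>, so the maximum \<open>\<mu>\<close> of its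
  Rayleigh quotient is an eigenvalue, \<open>\<mu> \<le> \<rho>\<close>, and \<open>\<parallel>\<Delta>^k u\<parallel> \<le> \<mu>^k \<parallel>u\<parallel>\<close>. Since
  \<open>\<parallel>\<chi>\<^sub>S\<parallel> = (vol S)^(1/2)\<close> and \<open>|u\<^sub>i| \<le> d\<^sub>-^(-r/2) \<parallel>u\<parallel>\<close>, summing the exponential series gives
  \<open>|e^(-\<tau>\<Delta>)\<chi>\<^sub>S - \<chi>\<^sub>S| \<le> (e^(\<tau>\<rho>) - 1) d\<^sub>-^(-r/2) (vol S)^(1/2) < 1/2\<close> pointwise.

  (ii) Writing \<open>\<Delta> = c - (c - \<Delta>)\<close> with \<open>c - \<Delta>\<close> entrywise nonnegative shows that the heat
  semigroup preserves positivity, hence does not increase the sup norm. By the mean value theorem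
  \<open>e^(-\<tau>\<Delta>)\<chi>\<^sub>S\<close> differs from \<open>\<chi>\<^sub>S\<close> by at most \<open>\<tau> max |\<Delta>\<chi>\<^sub>S| \<le> 1/2\<close>, with strict inequality
  off \<open>S\<close>.
\<close>

definition l1_norm :: "('v::finite \<Rightarrow> real) \<Rightarrow> real" where
  "l1_norm v = (\<Sum>j\<in>UNIV. \<bar>v j\<bar>)"

lemma abs_le_l1_norm: "\<bar>v i\<bar> \<le> l1_norm v"
  unfolding l1_norm_def by (rule member_le_sum) auto

lemma l1_norm_funpow_le:
  fixes T :: "('v::finite \<Rightarrow> real) \<Rightarrow> 'v \<Rightarrow> real"
  assumes T: "\<And>u. l1_norm (T u) \<le> R * l1_norm u" and R: "R \<ge> 0"
  shows "l1_norm ((T ^^ k) u) \<le> R ^ k * l1_norm u"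
proof (induction k)
  case 0
  then show ?case by simp
next
  case (Suc k)
  have "l1_norm ((T ^^ Suc k) u) \<le> R * l1_norm ((T ^^ k) u)"
    using T by simp
  also have "\<dots> \<le> R * (R ^ k * l1_norm u)"
    using Suc R by (rule mult_left_mono)
  finally show ?case by (simp add: mult_ac)
qed

lemma exp_series_summable_abs:
  fixes T :: "('v::finite \<Rightarrow> real) \<Rightarrow> 'v \<Rightarrow> real"
  assumes "\<And>u. l1_norm (T u) \<le> R * l1_norm u" and "R \<ge> 0"
  shows "summable (\<lambda>k. \<bar>t ^ k / fact k * (T ^^ k) v i\<bar>)"
proof (rule summable_comparison_test')
  show "summable (\<lambda>k. (\<bar>t\<bar> * R) ^ k / fact k * l1_norm v)"
    using summable_exp_generic[of "\<bar>t\<bar> * R"]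
    by (intro summable_mult2) (simp add: divide_inverse mult.commute)
  fix k :: nat
  have "\<bar>(T ^^ k) v i\<bar> \<le> R ^ k * l1_norm v"
    using abs_le_l1_norm l1_norm_funpow_le[OF assms] by (rule order_trans)
  then have "\<bar>t\<bar> ^ k / fact k * \<bar>(T ^^ k) v i\<bar> \<le> \<bar>t\<bar> ^ k / fact k * (R ^ k * l1_norm v)"
    by (rule mult_left_mono) simp
  then show "norm \<bar>t ^ k / fact k * (T ^^ k) v i\<bar> \<le> (\<bar>t\<bar> * R) ^ k / fact k * l1_norm v"
    by (simp add: abs_mult power_abs power_mult_distrib mult_ac)
qed

lemma exp_estimate_below_tau_rho:
  fixes \<tau> \<mu> \<rho> m V :: real
  assumes "0 \<le> \<mu>" "\<mu> \<le> \<rho>" "\<tau> > 0" "m > 0" "V > 0"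
    and tau_rho: "\<tau> < ln (1 + 1/2 * m * V powr (-1/2)) / \<rho>"
  shows "(exp (\<tau> * \<mu>) - 1) * (sqrt V / m) < 1/2"
proof -
  have "\<rho> > 0"
    using assms by (cases "\<rho> = 0") auto
  then have "\<tau> * \<rho> < ln (1 + 1/2 * m * V powr (-1/2))"
    using tau_rho by (simp add: pos_less_divide_eq)
  moreover have "\<tau> * \<mu> \<le> \<tau> * \<rho>"
    using assms by simp
  ultimately have "\<tau> * \<mu> < ln (1 + 1/2 * m * V powr (-1/2))"
    by linarith
  moreover have "1 + 1/2 * m * V powr (-1/2) > 0"
    using \<open>m > 0\<close> by (simp add: add_pos_nonneg)
  ultimately have "exp (\<tau> * \<mu>) < 1 + 1/2 * m * V powr (-1/2)"
    by (metis exp_less_cancel_iff exp_ln)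
  then show ?thesis
    using \<open>V > 0\<close> \<open>m > 0\<close> by (simp add: powr_minus powr_half_sqrt field_simps)
qed

lemma quadratic_nonneg_imp_sq_le:
  fixes a b c :: real
  assumes quad: "\<And>s. 0 \<le> a + 2 * s * b + s\<^sup>2 * c" and "c \<ge> 0"
  shows "b\<^sup>2 \<le> a * c"
proof (cases "c = 0")
  case True
  have "b = 0"
    using quad[of "-(a+1)/(2*b)"] True by (cases "b = 0") (simp_all add: field_simps)
  then show ?thesis
    using True by simp
next
  case False
  then show ?thesis
    using quad[of "-b/c"] \<open>c \<ge> 0\<close> by (simp add: power2_eq_square field_simps)
qed

text \<open>One step of the binomial expansion of \<open>(c - A)^n\<close>, with \<open>x k\<close> standing for \<open>A^k v\<close>.\<close>
lemma binomial_sum_Suc: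
  fixes c :: real and x :: "nat \<Rightarrow> real"
  shows "(\<Sum>k\<le>n. of_nat (n choose k) * c ^ (n - k) * (-1) ^ k * (c * x k - x (Suc k))) =
         (\<Sum>k\<le>Suc n. of_nat (Suc n choose k) * c ^ (Suc n - k) * (-1) ^ k * x k)"
proof -
  define g where "g k = of_nat (n choose k) * c ^ (Suc n - k) * (-1) ^ k * x k" for k
  define h where "h k = of_nat (n choose k) * c ^ (n - k) * (-1) ^ k * x (Suc k)" for k
  have "(\<Sum>k\<le>n. of_nat (n choose k) * c ^ (n - k) * (-1) ^ k * (c * x k - x (Suc k))) =
      (\<Sum>k\<le>n. g k - h k)"
    by (intro sum.cong refl) (simp add: g_def h_def Suc_diff_le algebra_simps)
  also have "\<dots> = g 0 + (\<Sum>k\<le>n. g (Suc k) - h k)"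
  proof -
    have "(\<Sum>k\<le>n. g k) = (\<Sum>k\<le>Suc n. g k)"
      by (simp add: g_def)
    also have "\<dots> = g 0 + (\<Sum>k\<le>n. g (Suc k))"
      by (rule sum.atMost_Suc_shift)
    finally show ?thesis
      by (simp add: sum_subtractf)
  qed
  also have "\<dots> = (\<Sum>k\<le>Suc n. of_nat (Suc n choose k) * c ^ (Suc n - k) * (-1) ^ k * x k)"
    by (subst sum.atMost_Suc_shift) (simp add: g_def h_def algebra_simps, intro sum.cong, simp_all)
  finally show ?thesis .
qed

lemma binomial_exp_coeff:
  fixes t c :: real
  assumes "k \<le> n"
  shows "(-t) ^ n / fact n * (of_nat (n choose k) * c ^ (n - k) * (-1) ^ k) =
         t ^ k / fact k * ((-c * t) ^ (n - k) / fact (n - k))"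
proof -
  obtain m where n: "n = k + m"
    using assms le_Suc_ex by blast
  have "(-t) ^ n * c ^ (n - k) * (-1) ^ k = ((-t) * (-1)) ^ k * ((-t) * c) ^ m"
    unfolding n power_add power_mult_distrib by (simp add: mult_ac)
  then have "(-t) ^ n * c ^ (n - k) * (-1) ^ k = t ^ k * (-c * t) ^ (n - k)"
    using n by (simp add: mult_ac)
  moreover have "of_nat (n choose k) = (fact n / (fact k * fact (n - k)) :: real)"
    using assms by (rule binomial_fact)
  ultimately show ?thesis by (simp add: mult_ac)
qed

lemma mbo_step_eq_if_close:
  assumes "\<And>i. \<bar>heat w r \<tau> (indicator S) i - indicator S i\<bar> < 1/2"
  shows "mbo_step w r \<tau> S = S"
proof (rule set_eqI)
  show "i \<in> mbo_step w r \<tau> S \<longleftrightarrow> i \<in> S" for i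
    using abs_less_iff[THEN iffD1, OF assms[of i]] by (cases "i \<in> S") (auto simp: mbo_step_def)
qed

locale weighted_graph =
  fixes w :: "'v::finite \<Rightarrow> 'v \<Rightarrow> real" and r :: real
  assumes sym: "\<And>i j. w i j = w j i"
    and nonneg: "\<And>i j. w i j \<ge> 0"
    and degree_pos: "\<And>i. degree w i > 0"
begin

abbreviation "d \<equiv> degree w"

abbreviation "\<Delta> \<equiv> graph_laplacian w r"

lemma laplacian_eq: "\<Delta> u i = d i powr (-r) * (d i * u i - (\<Sum>j\<in>UNIV. w i j * u j))"
  unfolding graph_laplacian_def degree_def
  by (simp add: algebra_simps sum_subtractf sum_distrib_left sum_distrib_right)

lemma laplacian_lincomb: "\<Delta> (\<lambda>i. a * u i + b * v i) = (\<lambda>i. a * \<Delta> u i + b * \<Delta> v i)"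
  unfolding laplacian_eq by (rule ext) (simp add: algebra_simps sum.distrib sum_distrib_left)

lemma laplacian_sum: "\<Delta> (\<lambda>i. \<Sum>k\<in>K. a k * u k i) = (\<lambda>i. \<Sum>k\<in>K. a k * \<Delta> (u k) i)"
proof (cases "finite K")
  case True
  then show ?thesis
    unfolding laplacian_eq
    by (intro ext) (simp add: algebra_simps sum_subtractf sum.distrib sum_distrib_left sum.swap[of _ K])
qed (simp add: graph_laplacian_def)

lemma laplacian_const: "\<Delta> (\<lambda>_. m) = (\<lambda>_. 0)"
  unfolding graph_laplacian_def by simp

lemma degree_powr_pos: "d i powr s > 0"
  using degree_pos[of i] by simp

lemma min_degree_pos: "min_degree w > 0"
  unfolding min_degree_def using degree_pos by (simp add: Min_gr_iff)

lemma min_degree_le: "min_degree w \<le> d i"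
  unfolding min_degree_def by (rule Min_le) auto

subsection \<open>The inner product of \<open>\<V>\<close> and the Laplacian\<close>

definition vinner :: "('v \<Rightarrow> real) \<Rightarrow> ('v \<Rightarrow> real) \<Rightarrow> real" where
  "vinner u v = (\<Sum>i\<in>UNIV. d i powr r * u i * v i)"

lemma vinner_commute: "vinner u v = vinner v u"
  unfolding vinner_def by (simp add: algebra_simps)

lemma vinner_self_nonneg: "vinner u u \<ge> 0"
  unfolding vinner_def by (intro sum_nonneg) (auto simp: mult.assoc)

lemma vinner_self_eq_0_iff: "vinner u u = 0 \<longleftrightarrow> u = (\<lambda>_. 0)"
proof
  assume "vinner u u = 0"
  then have "\<forall>i\<in>UNIV. d i powr r * (u i * u i) = 0"
    unfolding vinner_def by (subst sum_nonneg_eq_0_iff[symmetric]) (auto simp: mult.assoc)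
  then show "u = (\<lambda>_. 0)"
    using degree_powr_pos[of _ r] by fastforce
qed (simp add: vinner_def)

lemma vinner_self_pos: "u \<noteq> (\<lambda>_. 0) \<Longrightarrow> vinner u u > 0"
  using vinner_self_nonneg[of u] vinner_self_eq_0_iff[of u] by linarith

lemma vinner_indicator: "vinner (indicator S) (indicator S) = vol w r S"
  unfolding vinner_def vol_def by (simp add: indicator_def if_distrib sum.If_cases)

lemma vinner_scale: "vinner (\<lambda>i. a * u i) (\<lambda>i. a * v i) = a\<^sup>2 * vinner u v"
  unfolding vinner_def by (simp add: algebra_simps sum_distrib_left power2_eq_square)

lemma vinner_add_scale:
  "vinner (\<lambda>i. u i + s * v i) (\<lambda>i. u' i + s * v' i) =
   vinner u u' + s * vinner u v' + s * vinner v u' + s\<^sup>2 * vinner v v'"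
  unfolding vinner_def by (simp add: algebra_simps sum.distrib sum_distrib_left power2_eq_square)

lemma abs_le_sqrt_vinner:
  assumes "r \<ge> 0"
  shows "\<bar>f i\<bar> \<le> sqrt (vinner f f) / min_degree w powr (r/2)"
proof -
  have "d i powr r * f i * f i \<le> vinner f f"
    unfolding vinner_def by (rule member_le_sum) (auto simp: mult.assoc)
  moreover have "(\<bar>f i\<bar> * d i powr (r/2))\<^sup>2 = d i powr r * f i * f i"
  proof -
    have "(d i powr (r/2))\<^sup>2 = d i powr r"
      by (simp add: power2_eq_square flip: powr_add)
    then show ?thesis
      by (simp add: power_mult_distrib) (simp add: power2_eq_square)
  qed
  ultimately have "\<bar>f i\<bar> * d i powr (r/2) \<le> sqrt (vinner f f)"
    by (simp add: real_le_rsqrt)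
  moreover have "\<bar>f i\<bar> * min_degree w powr (r/2) \<le> \<bar>f i\<bar> * d i powr (r/2)"
    using min_degree_pos min_degree_le assms by (intro mult_left_mono powr_mono2) auto
  ultimately show ?thesis
    using min_degree_pos by (simp add: field_simps)
qed

lemma vinner_laplacian_left:
  "vinner (\<Delta> u) v = (\<Sum>i\<in>UNIV. d i * u i * v i) - (\<Sum>i\<in>UNIV. \<Sum>j\<in>UNIV. w i j * u j * v i)"
proof -
  have "d i powr r * \<Delta> u i * v i = d i * u i * v i - (\<Sum>j\<in>UNIV. w i j * u j * v i)" for i
    using degree_pos[of i]
    by (simp add: laplacian_eq powr_minus sum_distrib_left sum_distrib_right field_simps)
  then show ?thesis
    unfolding vinner_def by (simp add: sum_subtractf)
qed

lemma laplacian_self_adjoint: "vinner (\<Delta> u) v = vinner u (\<Delta> v)"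
proof -
  have "(\<Sum>i\<in>UNIV. \<Sum>j\<in>UNIV. w i j * u j * v i) = (\<Sum>j\<in>UNIV. \<Sum>i\<in>UNIV. w j i * v i * u j)"
    by (subst sum.swap) (simp add: sym mult_ac)
  then show ?thesis
    by (simp add: vinner_laplacian_left vinner_commute[of u] mult_ac)
qed

lemma vinner_laplacian_self_eq:
  "2 * vinner (\<Delta> u) u = (\<Sum>i\<in>UNIV. \<Sum>j\<in>UNIV. w i j * (u i - u j)\<^sup>2)"
proof -
  have deg: "(\<Sum>i\<in>UNIV. \<Sum>j\<in>UNIV. w i j * (u j)\<^sup>2) = (\<Sum>i\<in>UNIV. d i * (u i)\<^sup>2)"
    by (subst sum.swap) (simp add: degree_def sym sum_distrib_right)
  have "(\<Sum>i\<in>UNIV. \<Sum>j\<in>UNIV. w i j * (u i - u j)\<^sup>2) =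
     (\<Sum>i\<in>UNIV. d i * (u i)\<^sup>2) + (\<Sum>i\<in>UNIV. \<Sum>j\<in>UNIV. w i j * (u j)\<^sup>2)
      - 2 * (\<Sum>i\<in>UNIV. \<Sum>j\<in>UNIV. w i j * u j * u i)"
    by (simp add: power2_diff degree_def algebra_simps sum.distrib sum_subtractf
        sum_distrib_left sum_distrib_right)
  then show ?thesis
    unfolding deg vinner_laplacian_left by (simp add: power2_eq_square algebra_simps)
qed

lemma vinner_laplacian_self_nonneg: "vinner (\<Delta> u) u \<ge> 0"
proof -
  have "0 \<le> (\<Sum>i\<in>UNIV. \<Sum>j\<in>UNIV. w i j * (u i - u j)\<^sup>2)"
    by (intro sum_nonneg mult_nonneg_nonneg nonneg) auto
  then show ?thesis
    unfolding vinner_laplacian_self_eq[symmetric] by simp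
qed

lemma vinner_laplacian_add_scale:
  "vinner (\<Delta> (\<lambda>i. u i + s * v i)) (\<lambda>i. u i + s * v i) =
   vinner (\<Delta> u) u + 2 * s * vinner (\<Delta> u) v + s\<^sup>2 * vinner (\<Delta> v) v"
  using laplacian_lincomb[of 1 u s v] vinner_add_scale[of "\<Delta> u" s "\<Delta> v" u v]
  by (simp add: laplacian_self_adjoint[of v u] vinner_commute[of _ "\<Delta> u"])

lemma laplacian_cauchy_schwarz:
  "(vinner (\<Delta> u) v)\<^sup>2 \<le> vinner (\<Delta> u) u * vinner (\<Delta> v) v"
  using vinner_laplacian_self_nonneg[of "\<lambda>i. u i + s * v i" for s]
  by (intro quadratic_nonneg_imp_sq_le vinner_laplacian_self_nonneg)
    (simp_all only: vinner_laplacian_add_scale)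

text \<open>Any constant dominating the diagonal entries \<open>d\<^sub>i^(1-r)\<close> of \<open>\<Delta>\<close> would serve below.\<close>
definition shift_const :: real where
  "shift_const = (\<Sum>i\<in>UNIV. d i powr (-r) * d i)"

lemma degree_ratio_le_shift_const: "d i powr (-r) * d i \<le> shift_const"
  unfolding shift_const_def
  by (rule member_le_sum) (auto intro: mult_nonneg_nonneg less_imp_le[OF degree_pos])

lemma shift_const_nonneg: "shift_const \<ge> 0"
  unfolding shift_const_def using degree_pos by (intro sum_nonneg) (simp add: less_imp_le)

lemma abs_laplacian_le: "\<bar>\<Delta> v i\<bar> \<le> 2 * shift_const * l1_norm v"
proof -
  have "\<bar>w i j * (v i - v j)\<bar> \<le> w i j * (2 * l1_norm v)" for j
    using abs_le_l1_norm[of v i] abs_le_l1_norm[of v j] nonneg[of i j]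
    by (simp add: abs_mult mult_left_mono)
  then have "\<bar>\<Sum>j\<in>UNIV. w i j * (v i - v j)\<bar> \<le> d i * (2 * l1_norm v)"
    unfolding degree_def sum_distrib_right by (rule order_trans[OF sum_abs sum_mono])
  then have "\<bar>\<Delta> v i\<bar> \<le> d i powr (-r) * (d i * (2 * l1_norm v))"
    unfolding graph_laplacian_def abs_mult using degree_powr_pos[of i "-r"] by simp
  also have "\<dots> \<le> shift_const * (2 * l1_norm v)"
    using degree_ratio_le_shift_const[of i]
    by (simp add: l1_norm_def mult_right_mono flip: mult.assoc)
  finally show ?thesis
    by (simp add: mult_ac)
qed

lemma l1_norm_laplacian_le: "l1_norm (\<Delta> v) \<le> (2 * CARD('v) * shift_const) * l1_norm v"
proof -
  have "l1_norm (\<Delta> v) \<le> (\<Sum>j\<in>(UNIV::'v set). 2 * shift_const * l1_norm v)"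
    unfolding l1_norm_def[of "\<Delta> v"] by (intro sum_mono abs_laplacian_le)
  then show ?thesis
    by simp
qed

lemma heat_sums: "(\<lambda>k. (-t) ^ k / fact k * (\<Delta> ^^ k) v i) sums heat w r t v i"
proof -
  have "summable (\<lambda>k. \<bar>(-t) ^ k / fact k * (\<Delta> ^^ k) v i\<bar>)"
    by (rule exp_series_summable_abs[OF l1_norm_laplacian_le]) (simp add: shift_const_nonneg)
  then show ?thesis
    unfolding heat_def by (simp add: summable_rabs_cancel summable_sums)
qed

subsection \<open>Spectral bounds\<close>

text \<open>The Rayleigh quotient is scale invariant, so a maximiser exists on the compact unit sphere.\<close>
lemma rayleigh_quotient_attains_max:
  "\<exists>u. u \<noteq> (\<lambda>_. 0) \<and> (\<forall>y. vinner (\<Delta> y) y * vinner u u \<le> vinner (\<Delta> u) u * vinner y y)"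
proof -
  define R where "R x = vinner (\<Delta> (vec_nth x)) (vec_nth x) / vinner (vec_nth x) (vec_nth x)"
    for x :: "real^'v"
  have nonzero: "vec_nth x \<noteq> (\<lambda>_. 0)" if "x \<in> sphere 0 1" for x
  proof
    assume "vec_nth x = (\<lambda>_. 0)"
    then have "x = 0"
      by (simp add: vec_eq_iff)
    with that show False
      by simp
  qed
  have "continuous_on (sphere 0 1) R"
    unfolding R_def
  proof (intro continuous_on_divide)
    show "\<forall>x\<in>sphere 0 1. vinner (vec_nth x) (vec_nth x) \<noteq> 0"
      using vinner_self_pos[OF nonzero] by fastforce
  qed (simp_all add: vinner_def laplacian_eq continuous_intros)
  then obtain x0 where x0: "x0 \<in> sphere 0 1" and max: "\<And>x. x \<in> sphere 0 1 \<Longrightarrow> R x \<le> R x0"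
    using continuous_attains_sup[OF compact_sphere] by (metis sphere_eq_empty not_one_less_zero)
  define u where "u = vec_nth x0"
  have u: "u \<noteq> (\<lambda>_. 0)"
    using nonzero[OF x0] by (simp add: u_def)
  have "vinner (\<Delta> y) y * vinner u u \<le> vinner (\<Delta> u) u * vinner y y" for y
  proof (cases "y = (\<lambda>_. 0)")
    case True
    then show ?thesis by (simp add: vinner_def)
  next
    case False
    define a where "a = 1 / norm (vec_lambda y :: real^'v)"
    define x where "x = a *\<^sub>R vec_lambda y"
    have "norm (vec_lambda y :: real^'v) > 0"
      using False by (auto simp: vec_eq_iff)
    then have "x \<in> sphere 0 1" and "a \<noteq> 0"
      by (simp_all add: x_def a_def)
    have "vec_nth x = (\<lambda>i. a * y i)"
      by (auto simp: x_def)
    moreover have "\<Delta> (\<lambda>i. a * y i) = (\<lambda>i. a * \<Delta> y i)"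
      using laplacian_lincomb[of a y 0 y] by simp
    ultimately have "R x = vinner (\<Delta> y) y / vinner y y"
      using \<open>a \<noteq> 0\<close> by (simp add: R_def vinner_scale)
    then have "vinner (\<Delta> y) y / vinner y y \<le> vinner (\<Delta> u) u / vinner u u"
      using max[OF \<open>x \<in> sphere 0 1\<close>] by (simp add: R_def u_def)
    then show ?thesis
      using vinner_self_pos[OF False] vinner_self_pos[OF u] by (simp add: divide_simps mult.commute)
  qed
  with u show ?thesis by blast
qed

text \<open>\<open>Q = \<mu>\<langle>\<cdot>,\<cdot>\<rangle> - \<langle>\<Delta>\<cdot>,\<cdot>\<rangle>\<close> is a nonnegative form vanishing at \<open>u\<close>; by Cauchy-Schwarz for \<open>Q\<close>,
  \<open>u\<close> lies in its kernel.\<close>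
lemma laplacian_eigenvector_if_rayleigh_max:
  assumes bound: "\<And>y. vinner (\<Delta> y) y \<le> \<mu> * vinner y y"
    and max: "vinner (\<Delta> u) u = \<mu> * vinner u u"
  shows "\<Delta> u = (\<lambda>i. \<mu> * u i)"
proof -
  define Q where "Q y = \<mu> * vinner y y - vinner (\<Delta> y) y" for y
  define e where "e i = \<mu> * u i - \<Delta> u i" for i
  have e_inner: "vinner e v = \<mu> * vinner u v - vinner (\<Delta> u) v" for v
    unfolding e_def vinner_def by (simp add: algebra_simps sum_subtractf sum_distrib_left)
  have "(vinner e v)\<^sup>2 \<le> Q v * Q u" for v
  proof (rule quadratic_nonneg_imp_sq_le)
    show "0 \<le> Q v + 2 * s * vinner e v + s\<^sup>2 * Q u" for s
    proof -
      have "vinner (\<Delta> v) u = vinner (\<Delta> u) v"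
        by (metis laplacian_self_adjoint vinner_commute)
      then show ?thesis
        using bound[of "\<lambda>i. v i + s * u i"]
        unfolding vinner_add_scale vinner_laplacian_add_scale
        by (simp add: Q_def e_inner vinner_commute[of v u] algebra_simps)
    qed
    show "Q u \<ge> 0"
      using bound[of u] by (simp add: Q_def)
  qed
  then have "vinner e e = 0"
    using max by (simp add: Q_def)
  then show ?thesis
    by (simp add: vinner_self_eq_0_iff e_def fun_eq_iff)
qed

lemma laplacian_top_eigenpair:
  obtains \<mu> u where "\<mu> \<ge> 0" "u \<noteq> (\<lambda>_. 0)" "\<Delta> u = (\<lambda>i. \<mu> * u i)"
    "\<And>y. vinner (\<Delta> y) y \<le> \<mu> * vinner y y"
proof -
  obtain u where u: "u \<noteq> (\<lambda>_. 0)"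
    and max: "\<And>y. vinner (\<Delta> y) y * vinner u u \<le> vinner (\<Delta> u) u * vinner y y"
    using rayleigh_quotient_attains_max by blast
  define \<mu> where "\<mu> = vinner (\<Delta> u) u / vinner u u"
  have pos: "vinner u u > 0"
    using vinner_self_pos[OF u] .
  have bound: "vinner (\<Delta> y) y \<le> \<mu> * vinner y y" for y
    using max[of y] pos by (simp add: \<mu>_def field_simps)
  have "vinner (\<Delta> u) u = \<mu> * vinner u u"
    using pos by (simp add: \<mu>_def)
  then have "\<Delta> u = (\<lambda>i. \<mu> * u i)"
    using bound by (rule laplacian_eigenvector_if_rayleigh_max[rotated])
  moreover have "\<mu> \<ge> 0"
    using pos vinner_laplacian_self_nonneg[of u] by (simp add: \<mu>_def)
  ultimately show ?thesis
    using that u bound by blast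
qed

lemma vinner_laplacian_le:
  assumes "\<mu> \<ge> 0" and bound: "\<And>y. vinner (\<Delta> y) y \<le> \<mu> * vinner y y"
  shows "vinner (\<Delta> u) (\<Delta> u) \<le> \<mu>\<^sup>2 * vinner u u"
proof -
  define N where "N = vinner (\<Delta> u) (\<Delta> u)"
  have "N\<^sup>2 \<le> vinner (\<Delta> u) u * vinner (\<Delta> (\<Delta> u)) (\<Delta> u)"
    using laplacian_cauchy_schwarz[of u "\<Delta> u"] by (simp add: N_def)
  also have "\<dots> \<le> (\<mu> * vinner u u) * (\<mu> * N)"
    using bound[of u] bound[of "\<Delta> u"] vinner_laplacian_self_nonneg[of u]
      vinner_laplacian_self_nonneg[of "\<Delta> u"]
    by (intro mult_mono) (auto simp: N_def)
  finally have "N * N \<le> N * (\<mu>\<^sup>2 * vinner u u)"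
    by (simp add: power2_eq_square algebra_simps)
  moreover have "N \<ge> 0"
    by (simp add: N_def vinner_self_nonneg)
  ultimately show ?thesis
    using assms(1) vinner_self_nonneg[of u]
    by (cases "N = 0") (simp_all add: N_def)
qed

lemma vinner_laplacian_pow_le:
  assumes "\<mu> \<ge> 0" and "\<And>y. vinner (\<Delta> y) y \<le> \<mu> * vinner y y"
  shows "vinner ((\<Delta> ^^ k) u) ((\<Delta> ^^ k) u) \<le> \<mu> ^ (2 * k) * vinner u u"
proof (induction k)
  case 0
  then show ?case by simp
next
  case (Suc k)
  have "vinner ((\<Delta> ^^ Suc k) u) ((\<Delta> ^^ Suc k) u) \<le> \<mu>\<^sup>2 * vinner ((\<Delta> ^^ k) u) ((\<Delta> ^^ k) u)"
    using vinner_laplacian_le[OF assms] by simp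
  also have "\<dots> \<le> \<mu>\<^sup>2 * (\<mu> ^ (2 * k) * vinner u u)"
    using Suc by (simp add: mult_left_mono)
  finally show ?case
    by (simp add: power2_eq_square mult_ac)
qed

lemma graph_laplacian_c_of_real:
  "graph_laplacian_c w r (\<lambda>i. complex_of_real (u i)) = (\<lambda>i. complex_of_real (\<Delta> u i))"
  unfolding graph_laplacian_c_def graph_laplacian_def by (simp add: of_real_sum)

lemma norm_laplacian_eigenvalue_le:
  assumes "c \<in> laplacian_eigenvalues w r"
  shows "cmod c \<le> 2 * shift_const"
proof -
  obtain u where u: "u \<noteq> (\<lambda>_. 0)" "graph_laplacian_c w r u = (\<lambda>i. c * u i)"
    using assms unfolding laplacian_eigenvalues_def by blast
  have "Max (range (\<lambda>j. cmod (u j))) \<in> range (\<lambda>j. cmod (u j))"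
    by (rule Max_in) auto
  then obtain i where i: "cmod (u i) = Max (range (\<lambda>j. cmod (u j)))"
    by (metis imageE)
  have max: "cmod (u j) \<le> cmod (u i)" for j
    unfolding i by (rule Max_ge) auto
  have "cmod (u i) > 0"
    using u(1) max by (metis norm_le_zero_iff order.trans not_less ext)
  have "cmod (complex_of_real (w i j) * (u i - u j)) \<le> w i j * (2 * cmod (u i))" for j
    using norm_triangle_ineq4[of "u i" "u j"] max[of j] nonneg[of i j]
    by (simp add: norm_mult mult_left_mono)
  then have "cmod (\<Sum>j\<in>UNIV. complex_of_real (w i j) * (u i - u j)) \<le> d i * (2 * cmod (u i))"
    unfolding degree_def sum_distrib_right by (rule order_trans[OF norm_sum sum_mono])
  moreover have "cmod c * cmod (u i) =
      d i powr (-r) * cmod (\<Sum>j\<in>UNIV. complex_of_real (w i j) * (u i - u j))"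
    using arg_cong[OF fun_cong[OF u(2), of i], of cmod]
    by (simp add: graph_laplacian_c_def norm_mult)
  ultimately have "cmod c * cmod (u i) \<le> d i powr (-r) * (d i * (2 * cmod (u i)))"
    by (simp add: mult_left_mono)
  also have "\<dots> \<le> shift_const * (2 * cmod (u i))"
    using degree_ratio_le_shift_const[of i] by (simp add: mult_right_mono flip: mult.assoc)
  finally show ?thesis
    using \<open>cmod (u i) > 0\<close> by (simp add: mult_ac)
qed

lemma eigenvalue_le_spectral_radius:
  assumes "\<mu> \<ge> 0" "u \<noteq> (\<lambda>_. 0)" "\<Delta> u = (\<lambda>i. \<mu> * u i)"
  shows "\<mu> \<le> laplacian_spectral_radius w r"
proof -
  have "complex_of_real \<mu> \<in> laplacian_eigenvalues w r"
    unfolding laplacian_eigenvalues_def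
    using assms(2,3) by (auto simp: fun_eq_iff graph_laplacian_c_of_real intro!: exI[of _ "\<lambda>i. complex_of_real (u i)"])
  moreover have "bdd_above (cmod ` laplacian_eigenvalues w r)"
    using norm_laplacian_eigenvalue_le by (auto intro!: bdd_aboveI)
  ultimately have "cmod (complex_of_real \<mu>) \<le> laplacian_spectral_radius w r"
    unfolding laplacian_spectral_radius_def by (intro cSup_upper imageI)
  then show ?thesis
    using assms(1) by simp
qed

lemma laplacian_pow_contraction:
  obtains \<mu> where "0 \<le> \<mu>" "\<mu> \<le> laplacian_spectral_radius w r"
    "\<And>k u. vinner ((\<Delta> ^^ k) u) ((\<Delta> ^^ k) u) \<le> \<mu> ^ (2 * k) * vinner u u"
proof -
  obtain \<mu> u where eigen: "\<mu> \<ge> 0" "u \<noteq> (\<lambda>_. 0)" "\<Delta> u = (\<lambda>i. \<mu> * u i)"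
    and bound: "\<And>y. vinner (\<Delta> y) y \<le> \<mu> * vinner y y"
    using laplacian_top_eigenpair by blast
  show ?thesis
    by (rule that[OF eigen(1) eigenvalue_le_spectral_radius[OF eigen]
          vinner_laplacian_pow_le[OF eigen(1) bound]])
qed

subsection \<open>Stationarity below \<open>\<tau>\<^sub>\<rho>\<close>\<close>

lemma heat_minus_self_le:
  assumes bound: "\<And>k. \<bar>(\<Delta> ^^ k) u i\<bar> \<le> \<mu> ^ k * C" and "t \<ge> 0"
  shows "\<bar>heat w r t u i - u i\<bar> \<le> (exp (t * \<mu>) - 1) * C"
proof -
  define a where "a k = (-t) ^ k / fact k * (\<Delta> ^^ k) u i" for k
  define b where "b k = (t * \<mu>) ^ k / fact k * C" for k
  have ab: "\<bar>a k\<bar> \<le> b k" for k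
    using mult_left_mono[OF bound[of k], of "t ^ k / fact k"] \<open>t \<ge> 0\<close>
    by (simp add: a_def b_def abs_mult power_abs power_mult_distrib mult_ac)
  have "a sums heat w r t u i" and "a 0 = u i"
    unfolding a_def by (rule heat_sums) simp
  then have a_sums: "(\<lambda>k. a (Suc k)) sums (heat w r t u i - u i)"
    by (simp only: sums_Suc_iff diff_add_cancel)
  have "b sums (exp (t * \<mu>) * C)" and "b 0 = C"
    unfolding b_def
    using sums_mult2[OF exp_converges[of "t * \<mu>"], of C] by (simp_all add: divide_inverse mult_ac)
  then have b_sums: "(\<lambda>k. b (Suc k)) sums ((exp (t * \<mu>) - 1) * C)"
    by (simp only: sums_Suc_iff left_diff_distrib mult_1 diff_add_cancel)
  have "heat w r t u i - u i \<le> (exp (t * \<mu>) - 1) * C"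
    using ab by (intro sums_le[OF _ a_sums b_sums]) (simp add: abs_le_iff)
  moreover have "- ((exp (t * \<mu>) - 1) * C) \<le> heat w r t u i - u i"
    using ab by (intro sums_le[OF _ sums_minus[OF b_sums] a_sums]) (metis abs_le_D2 minus_le_iff)
  ultimately show ?thesis
    by linarith
qed

lemma abs_laplacian_pow_indicator_le:
  assumes "r \<ge> 0" and "\<mu> \<ge> 0"
    and contraction: "vinner ((\<Delta> ^^ k) (indicator S)) ((\<Delta> ^^ k) (indicator S)) \<le>
      \<mu> ^ (2 * k) * vinner (indicator S) (indicator S)"
  shows "\<bar>(\<Delta> ^^ k) (indicator S) i\<bar> \<le> \<mu> ^ k * (sqrt (vol w r S) / min_degree w powr (r/2))"
proof -
  have "\<bar>(\<Delta> ^^ k) (indicator S) i\<bar> \<le>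
      sqrt (vinner ((\<Delta> ^^ k) (indicator S)) ((\<Delta> ^^ k) (indicator S))) / min_degree w powr (r/2)"
    using \<open>r \<ge> 0\<close> by (rule abs_le_sqrt_vinner)
  also have "\<dots> \<le> sqrt ((\<mu> ^ k)\<^sup>2 * vol w r S) / min_degree w powr (r/2)"
    using contraction
    by (intro divide_right_mono real_sqrt_le_mono)
      (simp_all add: vinner_indicator power_mult mult.commute[of 2])
  finally show ?thesis
    using \<open>\<mu> \<ge> 0\<close> by (simp add: real_sqrt_mult)
qed

theorem mbo_stationary_below_tau_rho:
  assumes "r \<ge> 0" and "\<tau> > 0" and "S \<noteq> {}"
    and tau_rho: "\<tau> < ln (1 + 1/2 * min_degree w powr (r/2) * vol w r S powr (-1/2))
                      / laplacian_spectral_radius w r"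
  shows "mbo_step w r \<tau> S = S"
proof -
  obtain \<mu> where \<mu>: "0 \<le> \<mu>" "\<mu> \<le> laplacian_spectral_radius w r"
    and contraction: "\<And>k u. vinner ((\<Delta> ^^ k) u) ((\<Delta> ^^ k) u) \<le> \<mu> ^ (2 * k) * vinner u u"
    using laplacian_pow_contraction by blast
  have "vol w r S > 0"
    unfolding vol_def using \<open>S \<noteq> {}\<close> degree_powr_pos by (intro sum_pos) auto
  then have small: "(exp (\<tau> * \<mu>) - 1) * (sqrt (vol w r S) / min_degree w powr (r/2)) < 1/2"
    using \<mu> \<open>\<tau> > 0\<close> min_degree_pos tau_rho by (intro exp_estimate_below_tau_rho) auto
  have "\<bar>heat w r \<tau> (indicator S) i - indicator S i\<bar> \<le>
      (exp (\<tau> * \<mu>) - 1) * (sqrt (vol w r S) / min_degree w powr (r/2))" for i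
    using abs_laplacian_pow_indicator_le[OF \<open>r \<ge> 0\<close> \<mu>(1) contraction] \<open>\<tau> > 0\<close>
    by (intro heat_minus_self_le) auto
  with small have "\<bar>heat w r \<tau> (indicator S) i - indicator S i\<bar> < 1/2" for i
    by (meson le_less_trans)
  then show ?thesis
    by (rule mbo_step_eq_if_close)
qed

subsection \<open>Positivity of the heat semigroup\<close>

text \<open>For \<open>c = shift_const\<close> the operator \<open>c - \<Delta>\<close> has nonnegative entries, so
  \<open>e^(-t\<Delta>) = e^(-ct) e^(t(c - \<Delta>))\<close> preserves positivity.\<close>
definition shifted_op :: "('v \<Rightarrow> real) \<Rightarrow> 'v \<Rightarrow> real" where
  "shifted_op v i = shift_const * v i - \<Delta> v i"

lemma shifted_op_eq:
  "shifted_op v i = (shift_const - d i powr (-r) * d i) * v i + d i powr (-r) * (\<Sum>j\<in>UNIV. w i j * v j)"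
  unfolding shifted_op_def laplacian_eq by (simp add: algebra_simps)

lemma shifted_op_nonneg: "(\<And>j. v j \<ge> 0) \<Longrightarrow> shifted_op v i \<ge> 0"
  unfolding shifted_op_eq using degree_ratio_le_shift_const[of i] nonneg
  by (intro add_nonneg_nonneg mult_nonneg_nonneg sum_nonneg) auto

lemma shifted_op_pow_nonneg: "(\<And>j. v j \<ge> 0) \<Longrightarrow> (shifted_op ^^ k) v i \<ge> 0"
proof (induction k arbitrary: i)
  case (Suc k)
  then show ?case
    using shifted_op_nonneg[of "(shifted_op ^^ k) v" i] by simp
qed simp

lemma l1_norm_shifted_op_le: "l1_norm (shifted_op v) \<le> (3 * CARD('v) * shift_const) * l1_norm v"
proof -
  have "\<bar>shifted_op v i\<bar> \<le> 3 * shift_const * l1_norm v" for i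
    using abs_triangle_ineq4[of "shift_const * v i" "\<Delta> v i"] abs_laplacian_le[of v i]
      mult_left_mono[OF abs_le_l1_norm[of v i] shift_const_nonneg]
    by (simp add: shifted_op_def abs_mult shift_const_nonneg)
  then have "l1_norm (shifted_op v) \<le> (\<Sum>j\<in>(UNIV::'v set). 3 * shift_const * l1_norm v)"
    unfolding l1_norm_def[of "shifted_op v"] by (intro sum_mono)
  then show ?thesis
    by simp
qed

lemma laplacian_pow_binomial:
  "(\<Delta> ^^ n) v i = (\<Sum>k\<le>n. of_nat (n choose k) * shift_const ^ (n - k) * (-1) ^ k * (shifted_op ^^ k) v i)"
proof (induction n arbitrary: i)
  case 0
  then show ?case by simp
next
  case (Suc n)
  have "(\<Delta> ^^ n) v = (\<lambda>i. \<Sum>k\<le>n. (of_nat (n choose k) * shift_const ^ (n - k) * (-1) ^ k) * (shifted_op ^^ k) v i)"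
    using Suc by (intro ext) (simp add: mult.assoc)
  then have "(\<Delta> ^^ Suc n) v = \<Delta> (\<lambda>i. \<Sum>k\<le>n. (of_nat (n choose k) * shift_const ^ (n - k) * (-1) ^ k) * (shifted_op ^^ k) v i)"
    by simp
  also have "\<dots> = (\<lambda>i. \<Sum>k\<le>n. of_nat (n choose k) * shift_const ^ (n - k) * (-1) ^ k *
      (shift_const * (shifted_op ^^ k) v i - (shifted_op ^^ Suc k) v i))"
    by (simp add: laplacian_sum shifted_op_def)
  finally show ?case
    using binomial_sum_Suc[where x = "\<lambda>k. (shifted_op ^^ k) v i"] by simp
qed

lemma heat_eq_exp_shifted_op:
  "heat w r t v i = exp (- shift_const * t) * (\<Sum>k. t ^ k / fact k * (shifted_op ^^ k) v i)"
proof -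
  define a where "a k = t ^ k / fact k * (shifted_op ^^ k) v i" for k
  define b where "b k = (- shift_const * t) ^ k / fact k" for k
  have "summable (\<lambda>k. norm (a k))"
    unfolding a_def real_norm_def
    by (rule exp_series_summable_abs[OF l1_norm_shifted_op_le]) (simp add: shift_const_nonneg)
  moreover have "summable (\<lambda>k. norm (b k))"
    unfolding b_def real_norm_def using summable_exp_generic[of "\<bar>- shift_const * t\<bar>"]
    by (simp add: abs_mult power_abs divide_inverse mult.commute)
  ultimately have "(\<Sum>k. a k) * (\<Sum>k. b k) = (\<Sum>n. \<Sum>k\<le>n. a k * b (n - k))"
    by (rule Cauchy_product)
  also have "\<dots> = (\<Sum>n. (-t) ^ n / fact n * (\<Delta> ^^ n) v i)"
  proof (rule suminf_cong)
    fix n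
    have "(-t) ^ n / fact n * (\<Delta> ^^ n) v i = (\<Sum>k\<le>n. (-t) ^ n / fact n *
        (of_nat (n choose k) * shift_const ^ (n - k) * (-1) ^ k) * (shifted_op ^^ k) v i)"
      by (simp add: laplacian_pow_binomial sum_distrib_left mult_ac)
    also have "\<dots> = (\<Sum>k\<le>n. a k * b (n - k))"
    proof (rule sum.cong[OF refl])
      fix k
      assume "k \<in> {..n}"
      then have "k \<le> n"
        by simp
      then show "(-t) ^ n / fact n * (of_nat (n choose k) * shift_const ^ (n - k) * (-1) ^ k) *
          (shifted_op ^^ k) v i = a k * b (n - k)"
        unfolding a_def b_def binomial_exp_coeff[OF \<open>k \<le> n\<close>] by (simp only: mult_ac)
    qed
    finally show "(\<Sum>k\<le>n. a k * b (n - k)) = (-t) ^ n / fact n * (\<Delta> ^^ n) v i" ..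
  qed
  finally show ?thesis
    using exp_converges[of "- shift_const * t"]
    by (simp add: heat_def a_def b_def sums_iff divide_inverse mult.commute)
qed

lemma shifted_exp_series_summable: "summable (\<lambda>k. t ^ k / fact k * (shifted_op ^^ k) v i)"
  by (rule summable_rabs_cancel, rule exp_series_summable_abs[OF l1_norm_shifted_op_le])
    (simp add: shift_const_nonneg)

lemma heat_nonneg:
  assumes "t \<ge> 0" and "\<And>j. v j \<ge> 0"
  shows "heat w r t v i \<ge> 0"
  unfolding heat_eq_exp_shifted_op using assms
  by (intro mult_nonneg_nonneg suminf_nonneg shifted_exp_series_summable shifted_op_pow_nonneg) auto

text \<open>Strict positivity only needs the first two terms \<open>v + t (c - \<Delta>) v\<close> of the series.\<close>
lemma heat_pos:
  assumes "t > 0" and "\<And>j. v j \<ge> 0" and "v i > 0 \<or> shifted_op v i > 0"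
  shows "heat w r t v i > 0"
proof -
  have terms: "0 \<le> t ^ k / fact k * (shifted_op ^^ k) v i" for k
    using assms by (intro mult_nonneg_nonneg shifted_op_pow_nonneg) auto
  have "0 < v i + t * shifted_op v i"
    using assms shifted_op_nonneg[of v i] by (auto intro: add_pos_nonneg add_nonneg_pos)
  also have "\<dots> = (\<Sum>k\<in>{0,1}. t ^ k / fact k * (shifted_op ^^ k) v i)"
    by simp
  also have "\<dots> \<le> (\<Sum>k. t ^ k / fact k * (shifted_op ^^ k) v i)"
    using terms by (intro sum_le_suminf shifted_exp_series_summable) auto
  finally show ?thesis
    unfolding heat_eq_exp_shifted_op by simp
qed

subsection \<open>Stationarity below \<open>\<tau>\<^sub>\<kappa>\<close>\<close>

lemma laplacian_pow_lincomb:
  "(\<Delta> ^^ k) (\<lambda>i. a * u i + b * v i) = (\<lambda>i. a * (\<Delta> ^^ k) u i + b * (\<Delta> ^^ k) v i)"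
  by (induction k) (simp_all add: laplacian_lincomb)

lemma heat_lincomb:
  "heat w r t (\<lambda>j. a * u j + b * v j) i = a * heat w r t u i + b * heat w r t v i"
proof -
  have "(\<lambda>k. a * ((-t) ^ k / fact k * (\<Delta> ^^ k) u i) + b * ((-t) ^ k / fact k * (\<Delta> ^^ k) v i))
      sums (a * heat w r t u i + b * heat w r t v i)"
    by (intro sums_add sums_mult heat_sums)
  then show ?thesis
    using heat_sums[of t "\<lambda>j. a * u j + b * v j" i]
    by (simp add: laplacian_pow_lincomb algebra_simps sums_iff)
qed

lemma heat_eq_self_if_higher_terms_vanish:
  assumes "\<And>k. k > 0 \<Longrightarrow> (-t) ^ k * (\<Delta> ^^ k) v i = 0"
  shows "heat w r t v i = v i"
proof -
  have "(\<lambda>k. (-t) ^ k / fact k * (\<Delta> ^^ k) v i) = (\<lambda>k. if k = 0 then v i else 0)"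
    using assms by (auto simp: fun_eq_iff)
  then show ?thesis
    using heat_sums[of t v i] sums_single[of 0 "\<lambda>_. v i"] by (simp add: sums_unique2)
qed

lemma laplacian_pow_const: "(\<Delta> ^^ Suc k) (\<lambda>_. m) = (\<lambda>_. 0)"
  by (induction k) (simp_all add: laplacian_const)

lemma heat_const: "heat w r t (\<lambda>_. m) i = m"
proof (rule heat_eq_self_if_higher_terms_vanish)
  show "(-t) ^ k * (\<Delta> ^^ k) (\<lambda>_. m) i = 0" if "k > 0" for k
    using that laplacian_pow_const[of "k - 1" m] by simp
qed

lemma heat_at_0: "heat w r 0 v i = v i"
  by (rule heat_eq_self_if_higher_terms_vanish) simp

text \<open>Maximum principle: \<open>M \<plusminus> g \<ge> 0\<close> implies \<open>M \<plusminus> e^(-t\<Delta>) g \<ge> 0\<close>.\<close>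
lemma heat_abs_le:
  assumes "t \<ge> 0" and "\<And>j. \<bar>g j\<bar> \<le> M"
  shows "\<bar>heat w r t g i\<bar> \<le> M"
proof -
  have "0 \<le> M * 1 + s * g j" if "s = 1 \<or> s = -1" for s j
    using assms(2)[of j] that by (auto simp: abs_le_iff)
  then have "heat w r t (\<lambda>j. M * 1 + s * g j) i \<ge> 0" if "s = 1 \<or> s = -1" for s
    using \<open>t \<ge> 0\<close> that by (intro heat_nonneg)
  then show ?thesis
    using heat_lincomb[of t M "\<lambda>_. 1" _ g i] heat_const[of t 1 i]
    by (force simp: abs_le_iff)
qed

lemma heat_has_derivative:
  "((\<lambda>t. heat w r t u i) has_real_derivative (- heat w r t (\<Delta> u) i)) (at t)"
proof -
  define c where "c n = (\<Delta> ^^ n) u i / fact n" for n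
  define f where "f x = (\<Sum>n. c n * x ^ n)" for x :: real
  have heat_f: "heat w r s u i = f (-s)" for s
    unfolding heat_def f_def c_def by (simp add: mult_ac)
  have "summable (\<lambda>n. c n * (\<bar>t\<bar> + 1) ^ n)"
    using sums_summable[OF heat_sums[of "- (\<bar>t\<bar> + 1)" u i]] by (simp add: c_def mult_ac add.commute)
  then have "(f has_real_derivative (\<Sum>n. diffs c n * (-t) ^ n)) (at (-t))"
    unfolding f_def by (rule termdiffs_strong) simp
  moreover have "diffs c n * (-t) ^ n = (-t) ^ n / fact n * (\<Delta> ^^ n) (\<Delta> u) i" for n
    unfolding diffs_def c_def
    by (simp add: funpow_Suc_right field_simps del: funpow.simps of_nat_Suc)
  ultimately have "(f has_real_derivative heat w r t (\<Delta> u) i) (at (-t))"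
    by (simp add: heat_def)
  then show ?thesis
    unfolding heat_f by (simp add: DERIV_mirror)
qed

lemma laplacian_indicator_nonneg: "i \<in> S \<Longrightarrow> \<Delta> (indicator S) i \<ge> 0"
proof -
  assume "i \<in> S"
  have "(\<Sum>j\<in>UNIV. w i j * indicator S j) \<le> d i"
    unfolding degree_def using nonneg by (intro sum_mono) (auto simp: indicator_def)
  then show ?thesis
    using \<open>i \<in> S\<close> degree_powr_pos[of i "-r"] by (simp add: laplacian_eq)
qed

lemma laplacian_indicator_neg_imp_edge:
  assumes "\<Delta> (indicator S) i < 0"
  obtains j where "j \<in> S" and "w i j > 0"
proof -
  have "i \<notin> S"
    using assms laplacian_indicator_nonneg[of i S] by linarith
  then have "0 < (\<Sum>j\<in>UNIV. w i j * indicator S j)"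
    using assms degree_powr_pos[of i "-r"] by (simp add: laplacian_eq zero_less_mult_iff)
  then obtain j where "w i j * indicator S j > 0"
    by (meson not_le sum_nonpos)
  then show ?thesis
    using that by (cases "j \<in> S") auto
qed

text \<open>Where \<open>\<Delta>\<chi>\<^sub>S\<close> attains \<open>-M\<close> there is an edge into \<open>S\<close>, so \<open>c - \<Delta>\<close> makes
  \<open>M + \<Delta>\<chi>\<^sub>S\<close> strictly positive there; this gives strictness off \<open>S\<close>.\<close>
lemma heat_laplacian_indicator_gt:
  assumes "t > 0" and bound: "\<And>j. \<bar>\<Delta> (indicator S) j\<bar> \<le> M" and "M > 0"
  shows "heat w r t (\<Delta> (indicator S)) i > - M"
proof -
  define g where "g = \<Delta> (indicator S)"
  define v where "v = (\<lambda>j. M + g j)"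
  have v_nonneg: "v j \<ge> 0" for j
    using bound[of j] by (simp add: v_def g_def abs_le_iff)
  have "v i > 0 \<or> shifted_op v i > 0"
  proof (cases "v i > 0")
    case False
    then have "g i < 0"
      using \<open>M > 0\<close> by (simp add: v_def)
    then obtain j where "j \<in> S" and "w i j > 0"
      unfolding g_def by (rule laplacian_indicator_neg_imp_edge)
    then have "v j > 0"
      using laplacian_indicator_nonneg[of j S] \<open>M > 0\<close> by (simp add: v_def g_def)
    have "0 < d i powr (-r) * (w i j * v j)"
      using degree_powr_pos \<open>w i j > 0\<close> \<open>v j > 0\<close> by simp
    also have "\<dots> \<le> d i powr (-r) * (\<Sum>l\<in>UNIV. w i l * v l)"
      using v_nonneg nonneg degree_powr_pos[of i "-r"]
      by (intro mult_left_mono member_le_sum) auto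
    also have "\<dots> \<le> shifted_op v i"
      unfolding shifted_op_eq using degree_ratio_le_shift_const[of i] v_nonneg[of i] by simp
    finally show ?thesis
      by simp
  qed simp
  then have "heat w r t v i > 0"
    using \<open>t > 0\<close> v_nonneg by (intro heat_pos)
  then show ?thesis
    using heat_lincomb[of t M "\<lambda>_. 1" 1 g i] heat_const[of t 1 i] by (simp add: v_def g_def)
qed

text \<open>By the mean value theorem, \<open>e^(-\<tau>\<Delta>) \<chi>\<^sub>S = \<chi>\<^sub>S - \<tau> e^(-\<xi>\<Delta>) \<Delta>\<chi>\<^sub>S\<close> for some \<open>0 < \<xi> < \<tau>\<close>.\<close>
theorem mbo_stationary_below_tau_kappa:
  assumes "\<tau> > 0" and "\<Delta> (indicator S) \<noteq> (\<lambda>_. 0)"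
    and tau_kappa: "\<tau> \<le> 1 / (2 * Max (range (\<lambda>i. \<bar>\<Delta> (indicator S) i\<bar>)))"
  shows "mbo_step w r \<tau> S = S"
proof -
  define g where "g = \<Delta> (indicator S)"
  define M where "M = Max (range (\<lambda>i. \<bar>g i\<bar>))"
  have bound: "\<bar>g j\<bar> \<le> M" for j
    unfolding M_def by (rule Max_ge) auto
  obtain j0 where "g j0 \<noteq> 0"
    using assms(2) by (auto simp: g_def fun_eq_iff)
  then have "M > 0"
    using bound[of j0] by linarith
  then have "\<tau> * M \<le> 1/2"
    using tau_kappa by (simp add: M_def g_def field_simps)
  have mvt: "\<exists>\<xi>>0. heat w r \<tau> (indicator S) i = indicator S i - \<tau> * heat w r \<xi> g i" for i
    using MVT2[OF \<open>\<tau> > 0\<close> heat_has_derivative[where u = "indicator S" and i = i]] by (auto simp: heat_at_0 g_def)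
  show ?thesis
  proof (rule set_eqI)
    fix i
    obtain \<xi> where "\<xi> > 0" and \<xi>: "heat w r \<tau> (indicator S) i = indicator S i - \<tau> * heat w r \<xi> g i"
      using mvt by blast
    have "\<bar>heat w r \<xi> g i\<bar> \<le> M"
      using \<open>\<xi> > 0\<close> bound by (intro heat_abs_le) auto
    then have "\<tau> * heat w r \<xi> g i \<le> \<tau> * M"
      using \<open>\<tau> > 0\<close> by (simp add: abs_le_iff)
    moreover have "- M < heat w r \<xi> g i"
      using \<open>\<xi> > 0\<close> bound \<open>M > 0\<close> unfolding g_def by (rule heat_laplacian_indicator_gt)
    then have "\<tau> * (- M) < \<tau> * heat w r \<xi> g i"
      using \<open>\<tau> > 0\<close> by (rule mult_strict_left_mono)
    ultimately show "i \<in> mbo_step w r \<tau> S \<longleftrightarrow> i \<in> S"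
      using \<xi> \<open>\<tau> * M \<le> 1/2\<close> by (cases "i \<in> S") (auto simp: mbo_step_def)
  qed
qed

end

theorem mainTheorem10:
  fixes w :: "'v::finite \<Rightarrow> 'v \<Rightarrow> real" and r \<tau> :: real and S :: "'v set"
  assumes sym: "\<And>i j. w i j = w j i"
    and nonneg: "\<And>i j. w i j \<ge> 0"
    and noloop: "\<And>i. w i i = 0"
    and degpos: "\<And>i. degree w i > 0"
    and r: "0 \<le> r" "r \<le> 1"
    and tau: "\<tau> > 0"
    and cond: "(S \<noteq> {} \<and>
                \<tau> < ln (1 + 1/2 * min_degree w powr (r/2) * vol w r S powr (-1/2))
                      / laplacian_spectral_radius w r)
             \<or> (graph_laplacian w r (indicator S) \<noteq> (\<lambda>_. 0) \<and>
                \<tau> \<le> 1 / (2 * Max (range (\<lambda>i. \<bar>graph_laplacian w r (indicator S) i\<bar>))))"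
  shows "mbo_step w r \<tau> S = S"
proof -
  interpret weighted_graph w r
    using sym nonneg degpos by unfold_locales
  from cond show ?thesis
    by (elim disjE conjE)
      (simp_all add: mbo_stationary_below_tau_rho[OF r(1) tau] mbo_stationary_below_tau_kappa[OF tau])
qed

end
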